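(* Let $\Gamma=(V,E)$ be a reflexive, locally finite, $k$-separable graph. Let $X,Y$ be two $k$-fragments of $\Gamma$ such that $|X\cap Y|\ge k$ and $|X|-|X\cap Y|+k\le |Y^{\curlywedge}|$. Then $X\cap Y$ and $X\cup Y$ are $k$-fragments of $\Gamma$.
   Context: A graph is a pair $\Gamma=(V,E)$ with $E\subseteq V\times V$; reflexive means $(x,x)\in E$ for all $x$; locally finite means each $\Gamma(x)=\{y:(x,y)\in E\}$ is finite. For $A\subseteq V$: $\Gamma(A)=\bigcup_{x\in A}\Gamma(x)$, $\partial(A)=\Gamma(A)\setminus A$, $A^{\curlywedge}=V\setminus(A\cup\Gamma(A))$. $\Gamma$ is $k$-separable if some finite $X$ has $|X|\ge k$ and $|V\setminus\Gamma(X)|\ge k$; then $\kappa_k(\Gamma)=\min\{|\partial(X)|: X\text{ finite}, |X|\ge k, |V\setminus\Gamma(X)|\ge k\}$, and a $k$-fragment is a finite $X$ with $|X|\ge k$, $|V\setminus\Gamma(X)|\ge k$ and $|\partial(X)|=\kappa_k(\Gamma)$. (When $V$ is infinite, $|Y^{\curlywedge}|$ is infinite.) *)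

theory Defs
  imports Main
begin

definition graph :: "'a set \<Rightarrow> ('a \<times> 'a) set \<Rightarrow> bool" where
  "graph V E \<longleftrightarrow> E \<subseteq> V \<times> V"

definition reflexive_graph :: "'a set \<Rightarrow> ('a \<times> 'a) set \<Rightarrow> bool" where
  "reflexive_graph V E \<longleftrightarrow> (\<forall>x\<in>V. (x, x) \<in> E)"

definition nbhd :: "('a \<times> 'a) set \<Rightarrow> 'a \<Rightarrow> 'a set" where
  "nbhd E x = {y. (x, y) \<in> E}"

definition locally_finite :: "'a set \<Rightarrow> ('a \<times> 'a) set \<Rightarrow> bool" where
  "locally_finite V E \<longleftrightarrow> (\<forall>x\<in>V. finite (nbhd E x))"

definition nbhd_set :: "('a \<times> 'a) set \<Rightarrow> 'a set \<Rightarrow> 'a set" where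
  "nbhd_set E A = (\<Union>x\<in>A. nbhd E x)"

definition boundary :: "('a \<times> 'a) set \<Rightarrow> 'a set \<Rightarrow> 'a set" where
  "boundary E A = nbhd_set E A - A"

definition exterior :: "'a set \<Rightarrow> ('a \<times> 'a) set \<Rightarrow> 'a set \<Rightarrow> 'a set" where
  "exterior V E A = V - (A \<union> nbhd_set E A)"

text \<open>Cardinality at least n, where infinite sets have infinite cardinality.\<close>
definition card_ge :: "'a set \<Rightarrow> nat \<Rightarrow> bool" where
  "card_ge S n \<longleftrightarrow> infinite S \<or> n \<le> card S"

definition k_admissible :: "'a set \<Rightarrow> ('a \<times> 'a) set \<Rightarrow> nat \<Rightarrow> 'a set \<Rightarrow> bool" where
  "k_admissible V E k X \<longleftrightarrow>
     X \<subseteq> V \<and> finite X \<and> k \<le> card X \<and> card_ge (V - nbhd_set E X) k"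

definition k_separable :: "'a set \<Rightarrow> ('a \<times> 'a) set \<Rightarrow> nat \<Rightarrow> bool" where
  "k_separable V E k \<longleftrightarrow> (\<exists>X. k_admissible V E k X)"

definition kappa :: "'a set \<Rightarrow> ('a \<times> 'a) set \<Rightarrow> nat \<Rightarrow> nat" where
  "kappa V E k = Inf {card (boundary E X) | X. k_admissible V E k X}"

definition k_fragment :: "'a set \<Rightarrow> ('a \<times> 'a) set \<Rightarrow> nat \<Rightarrow> 'a set \<Rightarrow> bool" where
  "k_fragment V E k X \<longleftrightarrow> k_admissible V E k X \<and> card (boundary E X) = kappa V E k"

end

theory Submission
  imports Defs
begin

(* The key fact is that the boundary size is submodular on finite vertex sets of a
   reflexive, locally finite graph:  |d(X n Y)| + |d(X u Y)| <= |dX| + |dY|.  It follows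
   from |N(A)| = |A| + |d(A)|, N(X u Y) = N(X) u N(Y) and N(X n Y) <= N(X) n N(Y).
   For two k-fragments X, Y the right-hand side is 2 kappa.  Since |X n Y| >= k, the set
   X n Y is admissible, so |d(X n Y)| >= kappa and hence |d(X u Y)| <= kappa.  This bound
   controls how much of the exterior of Y is swallowed by N(X): |N(X) - N(Y)| is at most
   |X| - |X n Y|, so the hypothesis on |Y^ext| leaves at least k vertices outside N(X u Y),
   i.e. X u Y is admissible as well.  Minimality of kappa then forces equality on both
   sides of the submodular inequality. *)

lemma nbhd_set_Un: "nbhd_set E (A \<union> B) = nbhd_set E A \<union> nbhd_set E B"
  unfolding nbhd_set_def by auto

lemma nbhd_set_mono: "A \<subseteq> B \<Longrightarrow> nbhd_set E A \<subseteq> nbhd_set E B"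
  unfolding nbhd_set_def by auto

lemma subset_nbhd_set: "reflexive_graph V E \<Longrightarrow> A \<subseteq> V \<Longrightarrow> A \<subseteq> nbhd_set E A"
  unfolding reflexive_graph_def nbhd_set_def nbhd_def by auto

lemma finite_nbhd_set:
  "locally_finite V E \<Longrightarrow> finite A \<Longrightarrow> A \<subseteq> V \<Longrightarrow> finite (nbhd_set E A)"
  unfolding locally_finite_def nbhd_set_def by auto

lemma card_nbhd_set:
  assumes "reflexive_graph V E" "locally_finite V E" "finite A" "A \<subseteq> V"
  shows "card (nbhd_set E A) = card (boundary E A) + card A"
proof -
  have "finite (nbhd_set E A)" using finite_nbhd_set assms(2-4) .
  moreover have "A \<subseteq> nbhd_set E A" using subset_nbhd_set assms(1,4) .
  ultimately show ?thesis
    unfolding boundary_def by (metis card_Diff_subset card_mono finite_subset le_add_diff_inverse2)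
qed

lemma exterior_eq:
  "reflexive_graph V E \<Longrightarrow> Y \<subseteq> V \<Longrightarrow> exterior V E Y = V - nbhd_set E Y"
  unfolding exterior_def using subset_nbhd_set by blast

lemma boundary_submodular:
  assumes r: "reflexive_graph V E" and lf: "locally_finite V E"
    and X: "finite X" "X \<subseteq> V" and Y: "finite Y" "Y \<subseteq> V"
  shows "card (boundary E (X \<inter> Y)) + card (boundary E (X \<union> Y))
           \<le> card (boundary E X) + card (boundary E Y)"
proof -
  let ?N = "nbhd_set E"
  have fin: "finite (?N X)" "finite (?N Y)" using finite_nbhd_set lf X Y by blast+
  have "card (?N (X \<inter> Y)) \<le> card (?N X \<inter> ?N Y)"
    using fin by (intro card_mono) (auto simp: nbhd_set_def)
  moreover have "card (?N (X \<union> Y)) + card (?N X \<inter> ?N Y) = card (?N X) + card (?N Y)"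
    using card_Un_Int[OF fin] by (simp add: nbhd_set_Un)
  moreover have "card (X \<union> Y) + card (X \<inter> Y) = card X + card Y"
    using card_Un_Int[OF X(1) Y(1)] by simp
  moreover have "card (?N (X \<inter> Y)) = card (boundary E (X \<inter> Y)) + card (X \<inter> Y)"
    and "card (?N (X \<union> Y)) = card (boundary E (X \<union> Y)) + card (X \<union> Y)"
    using card_nbhd_set[OF r lf] X Y by auto
  moreover have "card (?N X) = card (boundary E X) + card X"
    and "card (?N Y) = card (boundary E Y) + card Y"
    using card_nbhd_set[OF r lf] X Y by auto
  ultimately show ?thesis by linarith
qed

lemma card_nbhd_set_Diff:
  assumes r: "reflexive_graph V E" and lf: "locally_finite V E"
    and X: "finite X" "X \<subseteq> V" and Y: "finite Y" "Y \<subseteq> V"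
  shows "card (nbhd_set E X - nbhd_set E Y) + card (boundary E Y) + card (X \<inter> Y)
           = card (boundary E (X \<union> Y)) + card X"
proof -
  let ?N = "nbhd_set E"
  have fin: "finite (?N X)" "finite (?N Y)" using finite_nbhd_set lf X Y by blast+
  have "card (?N (X \<union> Y)) = card (?N X - ?N Y) + card (?N Y)"
    unfolding nbhd_set_Un using fin
    by (metis Un_Diff_cancel2 card_Un_disjoint Diff_disjoint Int_commute finite_Diff)
  moreover have "card (X \<union> Y) + card (X \<inter> Y) = card X + card Y"
    using card_Un_Int[OF X(1) Y(1)] by simp
  moreover have "card (?N (X \<union> Y)) = card (boundary E (X \<union> Y)) + card (X \<union> Y)"
    using card_nbhd_set[OF r lf] X Y by simp
  ultimately show ?thesis using card_nbhd_set[OF r lf Y] by linarith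
qed

lemma kappa_le: "k_admissible V E k Z \<Longrightarrow> kappa V E k \<le> card (boundary E Z)"
  unfolding kappa_def by (rule cInf_lower) auto

lemma card_ge_mono: "card_ge A n \<Longrightarrow> A \<subseteq> B \<Longrightarrow> card_ge B n"
  unfolding card_ge_def by (metis card_mono finite_subset order_trans)

lemma card_ge_Diff:
  assumes "card_ge A (m + n)" "finite B" "card B \<le> m"
  shows "card_ge (A - B) n"
proof (cases "finite A")
  case True
  have "card A - card B \<le> card (A - B)" by (rule diff_card_le_card_Diff) fact
  then show ?thesis using assms True unfolding card_ge_def by linarith
qed (use assms in \<open>auto simp: card_ge_def\<close>)

lemma k_admissible_subset:
  assumes "k_admissible V E k X" "Z \<subseteq> X" "k \<le> card Z"
  shows "k_admissible V E k Z"
proof -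
  have "V - nbhd_set E X \<subseteq> V - nbhd_set E Z" using nbhd_set_mono[OF assms(2)] by blast
  then show ?thesis
    using assms card_ge_mono unfolding k_admissible_def by (blast intro: finite_subset)
qed

lemma k_admissible_Un:
  assumes r: "reflexive_graph V E" and lf: "locally_finite V E"
    and X: "k_admissible V E k X" and Y: "k_admissible V E k Y"
    and bd: "card (boundary E (X \<union> Y)) \<le> card (boundary E Y)"
    and ext: "card_ge (exterior V E Y) (card X - card (X \<inter> Y) + k)"
  shows "k_admissible V E k (X \<union> Y)"
proof -
  let ?N = "nbhd_set E"
  have XV: "finite X" "X \<subseteq> V" "k \<le> card X" and YV: "finite Y" "Y \<subseteq> V"
    using X Y unfolding k_admissible_def by auto
  have "card (?N X - ?N Y) \<le> card X - card (X \<inter> Y)"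
    using card_nbhd_set_Diff[OF r lf XV(1,2) YV] bd by linarith
  moreover have "finite (?N X - ?N Y)" using finite_nbhd_set[OF lf XV(1,2)] by simp
  ultimately have "card_ge ((V - ?N Y) - (?N X - ?N Y)) k"
    using card_ge_Diff ext exterior_eq[OF r YV(2)] by metis
  moreover have "(V - ?N Y) - (?N X - ?N Y) = V - ?N (X \<union> Y)" by (auto simp: nbhd_set_Un)
  moreover have "k \<le> card (X \<union> Y)" using XV YV card_mono[of "X \<union> Y" X] by auto
  ultimately show ?thesis using XV YV unfolding k_admissible_def by auto
qed

theorem mainTheorem3:
  fixes V :: "'a set" and E :: "('a \<times> 'a) set" and k :: nat and X Y :: "'a set"
  assumes "graph V E"
    and "reflexive_graph V E"
    and "locally_finite V E"
    and "k_separable V E k"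
    and "k_fragment V E k X"
    and "k_fragment V E k Y"
    and "k \<le> card (X \<inter> Y)"
    and "card_ge (exterior V E Y) (card X - card (X \<inter> Y) + k)"
  shows "k_fragment V E k (X \<inter> Y) \<and> k_fragment V E k (X \<union> Y)"
proof -
  let ?K = "kappa V E k"
  have X: "k_admissible V E k X" "card (boundary E X) = ?K"
    and Y: "k_admissible V E k Y" "card (boundary E Y) = ?K"
    using assms(5,6) unfolding k_fragment_def by auto
  have submod: "card (boundary E (X \<inter> Y)) + card (boundary E (X \<union> Y)) \<le> 2 * ?K"
    using boundary_submodular[OF assms(2,3)] X Y unfolding k_admissible_def by fastforce
  have adm_Int: "k_admissible V E k (X \<inter> Y)"
    using k_admissible_subset[OF X(1) _ assms(7)] by blast
  with submod have "card (boundary E (X \<union> Y)) \<le> ?K" using kappa_le by fastforce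
  then have adm_Un: "k_admissible V E k (X \<union> Y)"
    using k_admissible_Un[OF assms(2,3) X(1) Y(1) _ assms(8)] Y(2) by simp
  have "card (boundary E (X \<inter> Y)) = ?K" "card (boundary E (X \<union> Y)) = ?K"
    using submod kappa_le[OF adm_Int] kappa_le[OF adm_Un] by linarith+
  then show ?thesis using adm_Int adm_Un unfolding k_fragment_def by simp
qed

end
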